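(* For every integer $n\ge 1$, the pentagonal stacked prism $Y_{5,n}$ is odd prime.
   Context: All graphs are finite and simple. A graph $G$ of order $N$ is odd prime if there is a bijection $\ell:V(G)\to\{1,3,\ldots,2N-1\}$ with $\gcd(\ell(u),\ell(v))=1$ for every edge $uv$. For $k\ge 3$, $n\ge 1$, the stacked prism $Y_{k,n}$ is the Cartesian product $C_k\,\square\,P_n$ of a $k$-cycle and a path on $n$ vertices: vertices $v_{i,j}$ ($1\le i\le n$, $1\le j\le k$), with edges $v_{i,j}v_{i,j+1}$ ($1\le j\le k-1$), $v_{i,k}v_{i,1}$ for each $i$, and $v_{i,j}v_{i+1,j}$ for $1\le i\le n-1$, $1\le j\le k$. *)

theory Defs
  imports Main
begin

definition odd_prime_graph :: "'a set \<Rightarrow> 'a set set \<Rightarrow> bool" where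
  "odd_prime_graph V E \<longleftrightarrow>
     (\<exists>l. bij_betw l V {k. \<exists>i\<in>{1..card V}. k = 2 * i - 1} \<and>
          (\<forall>u v. {u, v} \<in> E \<longrightarrow> coprime (l u :: nat) (l v)))"

text \<open>Stacked prism Y_{k,n} = C_k \<box> P_n: vertex v_{i,j} is the pair (i,j),
1 \<le> i \<le> n, 1 \<le> j \<le> k.\<close>

definition stacked_prism_vertices :: "nat \<Rightarrow> nat \<Rightarrow> (nat \<times> nat) set" where
  "stacked_prism_vertices k n = {1..n} \<times> {1..k}"

definition stacked_prism_edges :: "nat \<Rightarrow> nat \<Rightarrow> (nat \<times> nat) set set" where
  "stacked_prism_edges k n =
     {{(i, j), (i, j + 1)} | i j. 1 \<le> i \<and> i \<le> n \<and> 1 \<le> j \<and> j \<le> k - 1}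
   \<union> {{(i, k), (i, 1)} | i. 1 \<le> i \<and> i \<le> n}
   \<union> {{(i, j), (i + 1, j)} | i j. 1 \<le> i \<and> i \<le> n - 1 \<and> 1 \<le> j \<and> j \<le> k}"

end

theory Submission
  imports Defs
begin

(* Layer i of Y_{k,n} receives the block of k consecutive odd numbers 2k(i-1)+1, ..., 2k(i-1)+2k-1,
   distributed around the cycle by a permutation of the layer. Two odd numbers whose difference is
   a power of two are coprime, so it suffices that the labels of cyclically adjacent vertices of a
   layer, and of vertically adjacent vertices of consecutive layers, differ by powers of two. For
   k = 5 five suitable permutations, used periodically, do this. *)

definition power_of_two_apart :: "nat \<Rightarrow> nat \<Rightarrow> bool" where
  "power_of_two_apart a b \<longleftrightarrow> (\<exists>e. b = a + 2 ^ e \<or> a = b + 2 ^ e)"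

lemma power_of_two_apart_commute: "power_of_two_apart a b \<longleftrightarrow> power_of_two_apart b a"
  unfolding power_of_two_apart_def by auto

lemma power_of_two_apart_add_left [simp]:
  "power_of_two_apart (c + a) (c + b) \<longleftrightarrow> power_of_two_apart a b"
  unfolding power_of_two_apart_def by auto

lemma power_of_two_apartI_small_gap:
  assumes "\<exists>d\<in>{1, 2, 4, 8}. b = a + d \<or> a = b + d"
  shows "power_of_two_apart a b"
proof -
  from assms obtain d where d: "d \<in> {1, 2, 4, 8}" and gap: "b = a + d \<or> a = b + d"
    by blast
  from d have "d \<in> (^) 2 ` {0, 1, 2, 3}"
    by simp
  with gap show ?thesis
    unfolding power_of_two_apart_def by blast
qed

lemma coprime_odd_add_power_of_two:
  fixes a :: nat
  assumes "odd a"
  shows "coprime a (a + 2 ^ e)"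
proof -
  from assms have "coprime a (2 ^ e)"
    by (simp add: coprime_commute odd_iff_mod_2_eq_one)
  then show ?thesis
    by (metis coprime_iff_gcd_eq_1 gcd_add2)
qed

lemma coprime_odd_if_power_of_two_apart:
  assumes "power_of_two_apart a b"
  shows "coprime (2 * a + 1) (2 * b + 1)"
proof -
  have *: "coprime (2 * a + 1) (2 * b + 1)" if "b = a + 2 ^ e" for a b e :: nat
  proof -
    have "coprime (2 * a + 1) ((2 * a + 1) + 2 ^ Suc e)"
      by (rule coprime_odd_add_power_of_two) simp
    with that show ?thesis
      by simp
  qed
  from assms show ?thesis
    unfolding power_of_two_apart_def by (metis * coprime_commute)
qed

lemma bij_betw_odd_numbers:
  "bij_betw (\<lambda>m::nat. 2 * m + 1) {0..<N} {m. \<exists>i\<in>{1..N}. m = 2 * i - 1}"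
proof (rule bij_betw_imageI)
  show "inj_on (\<lambda>m::nat. 2 * m + 1) {0..<N}"
    by (simp add: inj_on_def)
  show "(\<lambda>m. 2 * m + 1) ` {0..<N} = {m. \<exists>i\<in>{1..N}. m = 2 * i - 1}"
  proof safe
    fix m
    assume "m \<in> {0..<N}"
    then show "\<exists>i\<in>{1..N}. 2 * m + 1 = 2 * i - 1"
      by (intro bexI[of _ "Suc m"]) auto
  next
    fix i
    assume "i \<in> {1..N}"
    then show "2 * i - 1 \<in> (\<lambda>m. 2 * m + 1) ` {0..<N}"
      by (intro image_eqI[of _ _ "i - 1"]) auto
  qed
qed

lemma card_stacked_prism_vertices: "card (stacked_prism_vertices k n) = k * n"
  by (simp add: stacked_prism_vertices_def card_cartesian_product)

(* \<sigma> q arranges row q + 1 of the prism: the layer index of \<sigma> is 0-based, the rows are 1-based. *)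
definition prism_position :: "nat \<Rightarrow> (nat \<Rightarrow> nat \<Rightarrow> nat) \<Rightarrow> nat \<times> nat \<Rightarrow> nat" where
  "prism_position k \<sigma> = (\<lambda>(i, j). k * (i - 1) + \<sigma> (i - 1) j)"

lemma bij_betw_prism_position:
  assumes "\<And>q. bij_betw (\<sigma> q) {1..k} {0..<k}"
  shows "bij_betw (prism_position k \<sigma>) (stacked_prism_vertices k n) {0..<k * n}"
proof -
  have layer_lt: "\<sigma> q j < k" if "j \<in> {1..k}" for q j
    using assms[of q] that bij_betwE by fastforce
  have inj: "inj_on (prism_position k \<sigma>) (stacked_prism_vertices k n)"
  proof (rule inj_onI, clarify)
    fix i j i' j'
    assume V: "(i, j) \<in> stacked_prism_vertices k n" "(i', j') \<in> stacked_prism_vertices k n"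
      and eq: "prism_position k \<sigma> (i, j) = prism_position k \<sigma> (i', j')"
    from V have j: "j \<in> {1..k}" "j' \<in> {1..k}" and i: "1 \<le> i" "1 \<le> i'"
      by (auto simp: stacked_prism_vertices_def)
    have "(k * (i - 1) + \<sigma> (i - 1) j) div k = i - 1"
      and "(k * (i' - 1) + \<sigma> (i' - 1) j') div k = i' - 1"
      using layer_lt j by auto
    with eq i have "i = i'"
      by (simp add: prism_position_def)
    with eq have "\<sigma> (i - 1) j = \<sigma> (i - 1) j'"
      by (simp add: prism_position_def)
    with j have "j = j'"
      by (metis assms bij_betw_imp_inj_on inj_onD)
    with \<open>i = i'\<close> show "i = i' \<and> j = j'" ..
  qed
  have "prism_position k \<sigma> ` stacked_prism_vertices k n \<subseteq> {0..<k * n}"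
  proof clarify
    fix i j
    assume "(i, j) \<in> stacked_prism_vertices k n"
    then have "j \<in> {1..k}" "1 \<le> i" "i \<le> n"
      by (auto simp: stacked_prism_vertices_def)
    have "k * (i - 1) + \<sigma> (i - 1) j < k * (i - 1) + k"
      using layer_lt \<open>j \<in> {1..k}\<close> by simp
    also have "\<dots> = k * i"
      using \<open>1 \<le> i\<close> by (cases i) auto
    also have "\<dots> \<le> k * n"
      using \<open>i \<le> n\<close> by simp
    finally show "prism_position k \<sigma> (i, j) \<in> {0..<k * n}"
      by (simp add: prism_position_def)
  qed
  moreover have "card (prism_position k \<sigma> ` stacked_prism_vertices k n) = card {0..<k * n}"
    using inj by (simp add: card_image card_stacked_prism_vertices)
  ultimately show ?thesis
    using inj card_subset_eq[of "{0..<k * n}"] by (simp add: bij_betw_def)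
qed

lemma power_of_two_apart_prism_position:
  assumes "0 < k"
    and horizontal: "\<And>q j. j \<in> {1..k} \<Longrightarrow> power_of_two_apart (\<sigma> q j) (\<sigma> q (j mod k + 1))"
    and vertical: "\<And>q j. j \<in> {1..k} \<Longrightarrow> power_of_two_apart (\<sigma> q j) (k + \<sigma> (Suc q) j)"
    and edge: "{u, v} \<in> stacked_prism_edges k n"
  shows "power_of_two_apart (prism_position k \<sigma> u) (prism_position k \<sigma> v)"
proof -
  let ?pos = "prism_position k \<sigma>"
  have "\<exists>x y. {u, v} = {x, y} \<and> power_of_two_apart (?pos x) (?pos y)"
    using edge unfolding stacked_prism_edges_def
  proof (elim UnE CollectE exE conjE)
    fix i j
    assume uv: "{u, v} = {(i, j), (i, j + 1)}" and "1 \<le> j" "j \<le> k - 1"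
    then have "power_of_two_apart (\<sigma> (i - 1) j) (\<sigma> (i - 1) (j + 1))"
      using horizontal[of j "i - 1"] by simp
    with uv show ?thesis
      by (intro exI[of _ "(i, j)"] exI[of _ "(i, j + 1)"]) (simp add: prism_position_def)
  next
    fix i
    assume uv: "{u, v} = {(i, k), (i, 1)}"
    have "power_of_two_apart (\<sigma> (i - 1) k) (\<sigma> (i - 1) 1)"
      using horizontal[of k "i - 1"] \<open>0 < k\<close> by simp
    with uv show ?thesis
      by (intro exI[of _ "(i, k)"] exI[of _ "(i, 1)"]) (simp add: prism_position_def)
  next
    fix i j
    assume uv: "{u, v} = {(i, j), (i + 1, j)}" and "1 \<le> i" "1 \<le> j" "j \<le> k"
    then have "k * i + \<sigma> i j = k * (i - 1) + (k + \<sigma> (Suc (i - 1)) j)"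
      by (cases i) auto
    moreover have "power_of_two_apart (\<sigma> (i - 1) j) (k + \<sigma> (Suc (i - 1)) j)"
      using vertical \<open>1 \<le> j\<close> \<open>j \<le> k\<close> by simp
    ultimately show ?thesis
      using uv by (intro exI[of _ "(i, j)"] exI[of _ "(i + 1, j)"]) (simp add: prism_position_def)
  qed
  then show ?thesis
    by (metis doubleton_eq_iff power_of_two_apart_commute)
qed

theorem odd_prime_stacked_prism:
  assumes "0 < k"
    and "\<And>q. bij_betw (\<sigma> q) {1..k} {0..<k}"
    and "\<And>q j. j \<in> {1..k} \<Longrightarrow> power_of_two_apart (\<sigma> q j) (\<sigma> q (j mod k + 1))"
    and "\<And>q j. j \<in> {1..k} \<Longrightarrow> power_of_two_apart (\<sigma> q j) (k + \<sigma> (Suc q) j)"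
  shows "odd_prime_graph (stacked_prism_vertices k n) (stacked_prism_edges k n)"
  unfolding odd_prime_graph_def card_stacked_prism_vertices
proof (intro exI conjI allI impI)
  show "bij_betw (\<lambda>v. 2 * prism_position k \<sigma> v + 1) (stacked_prism_vertices k n)
      {m. \<exists>i\<in>{1..k * n}. m = 2 * i - 1}"
    using bij_betw_trans[OF bij_betw_prism_position[OF assms(2)] bij_betw_odd_numbers]
    by (simp add: comp_def)
  fix u v
  assume "{u, v} \<in> stacked_prism_edges k n"
  with assms show "coprime (2 * prism_position k \<sigma> u + 1) (2 * prism_position k \<sigma> v + 1)"
    by (intro coprime_odd_if_power_of_two_apart power_of_two_apart_prism_position)
qed

(* Row r + 1 is f composed with row r for the 5-cycle f = (0 3 2 1 4), which has order 5 like the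
   period of the rows; the vertical gaps 5 + f x - x for x = 0, ..., 4 are 8, 8, 4, 4, 1. Each row
   is a Hamiltonian cycle of {0..4} with steps 1 or 2. *)
definition pentagon_rows :: "nat list list" where
  "pentagon_rows = [[0, 1, 3, 4, 2], [3, 4, 2, 0, 1], [2, 0, 1, 3, 4], [1, 3, 4, 2, 0], [4, 2, 0, 1, 3]]"

definition pentagon_layer :: "nat \<Rightarrow> nat \<Rightarrow> nat" where
  "pentagon_layer q j = pentagon_rows ! (q mod 5) ! (j - 1)"

lemma less_5_cases: "(r::nat) < 5 \<Longrightarrow> r = 0 \<or> r = 1 \<or> r = 2 \<or> r = 3 \<or> r = 4"
  by auto

lemma pentagon_rows_permutations:
  "row \<in> set pentagon_rows \<Longrightarrow> distinct row \<and> set row = {0..<5} \<and> length row = 5"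
  by (auto simp: pentagon_rows_def)

lemma pentagon_layer_bij: "bij_betw (pentagon_layer q) {1..5} {0..<5}"
proof -
  have row: "pentagon_rows ! (q mod 5) \<in> set pentagon_rows"
    by (rule nth_mem) (simp add: pentagon_rows_def)
  have "bij_betw (\<lambda>j. j - 1) {1..5} {..<5::nat}"
    by (rule bij_betw_byWitness[where f' = Suc]) auto
  moreover have "bij_betw ((!) (pentagon_rows ! (q mod 5))) {..<5} {0..<5}"
    using pentagon_rows_permutations[OF row] by (intro bij_betw_nth) auto
  ultimately show ?thesis
    unfolding pentagon_layer_def using bij_betw_trans by (fastforce simp: comp_def)
qed

lemma pentagon_layer_horizontal:
  assumes "j \<in> {1..5}"
  shows "power_of_two_apart (pentagon_layer q j) (pentagon_layer q (j mod 5 + 1))"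
proof (rule power_of_two_apartI_small_gap)
  have "j = 1 \<or> j = 2 \<or> j = 3 \<or> j = 4 \<or> j = 5"
    using assms by auto
  then show "\<exists>d\<in>{1, 2, 4, 8}. pentagon_layer q (j mod 5 + 1) = pentagon_layer q j + d \<or>
      pentagon_layer q j = pentagon_layer q (j mod 5 + 1) + d"
    using less_5_cases[of "q mod 5"] unfolding pentagon_layer_def pentagon_rows_def by auto
qed

lemma pentagon_layer_vertical:
  assumes "j \<in> {1..5}"
  shows "power_of_two_apart (pentagon_layer q j) (5 + pentagon_layer (Suc q) j)"
proof (rule power_of_two_apartI_small_gap)
  have "j = 1 \<or> j = 2 \<or> j = 3 \<or> j = 4 \<or> j = 5"
    using assms by auto
  moreover have "Suc q mod 5 = Suc (q mod 5) mod 5"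
    by (simp add: mod_Suc_eq)
  ultimately show "\<exists>d\<in>{1, 2, 4, 8}. 5 + pentagon_layer (Suc q) j = pentagon_layer q j + d \<or>
      pentagon_layer q j = 5 + pentagon_layer (Suc q) j + d"
    using less_5_cases[of "q mod 5"] unfolding pentagon_layer_def pentagon_rows_def by auto
qed

theorem theorem3p7:
  fixes n :: nat
  assumes "n \<ge> 1"
  shows "odd_prime_graph (stacked_prism_vertices 5 n) (stacked_prism_edges 5 n)"
proof (rule odd_prime_stacked_prism)
  show "0 < (5::nat)"
    by simp
  show "bij_betw (pentagon_layer q) {1..5} {0..<5}" for q
    by (rule pentagon_layer_bij)
  show "power_of_two_apart (pentagon_layer q j) (pentagon_layer q (j mod 5 + 1))"
    if "j \<in> {1..5}" for q j
    using that by (rule pentagon_layer_horizontal)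
  show "power_of_two_apart (pentagon_layer q j) (5 + pentagon_layer (Suc q) j)"
    if "j \<in> {1..5}" for q j
    using that by (rule pentagon_layer_vertical)
qed

end
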